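(* Let $N\in\mathbb{N}$ with $N\ge3$ and $n\in\mathbb{N}$ with $n\ge n_N$. Then there is a real $E$ with $|E|\le 5.3\cdot10^{-2}\left(\frac{5}{96}\right)^{N/2}n^{-\frac{N+2}{2}}$ such that \[ \frac{1}{(24n+1)\lambda(n)}=\frac{1}{8\cdot3^{3/4}\sqrt\pi\,n^{5/4}}\left(\sum_{m=0}^{\lfloor\frac{N+1}{2}\rfloor}\frac{e_2(m)}{n^m}+E\right). \]
   Context: $\lambda(n):=\sqrt{\frac{\pi}{6\sqrt2}\sqrt{24n+1}}$, $e_2(m):=\binom{-\frac54}{m}24^{-m}$ for $m\in\mathbb{N}_0$, and $n_N:=\left(\frac{3(3N+4)\log(6N+8)}{1.3^2}\right)^4$. *)

theory Defs
  imports "HOL-Analysis.Analysis"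
begin

definition lam :: "nat \<Rightarrow> real" where
  "lam n = sqrt (pi / (6 * sqrt 2) * sqrt (24 * real n + 1))"

definition e2 :: "nat \<Rightarrow> real" where
  "e2 m = ((-5/4 :: real) gchoose m) * (1/24) ^ m"

definition nN :: "nat \<Rightarrow> real" where
  "nN N = (3 * (3 * real N + 4) * ln (6 * real N + 8) / (1.3 ^ 2)) ^ 4"

end

theory Submission
  imports Defs
begin

text \<open>
  Since (24n+1) \<lambda>(n) = 8 3^(3/4) sqrt(\<pi>) n^(5/4) (1 + x)^(5/4) with x = 1/(24n), the
  left-hand side is a constant times n^(-5/4) (1 + x)^(-5/4), and e2(m)/n^m is the m-th term
  of the binomial series of (1 + x)^(-5/4). That series alternates, and for x < 4/5 its terms
  decrease in modulus and are bounded by (5x/4)^k. Truncating after the index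
  M = (N+1) div 2 therefore costs at most (5/(96n))^(M+1) \<le> (5/(96n))^((N+2)/2), and
  5/96 < 5.3 \<cdot> 10^(-2). The hypotheses N \<ge> 3 and n \<ge> n_N are needed only to ensure n > 0.
\<close>

lemma alternating_series_remainder_le:
  fixes a :: "nat \<Rightarrow> real"
  assumes "a \<longlonglongrightarrow> 0" and "\<And>k. 0 \<le> a k" and "\<And>k. a (Suc k) \<le> a k"
  shows "\<bar>(\<Sum>i. (-1)^i * a i) - (\<Sum>i<K. (-1)^i * a i)\<bar> \<le> a K"
proof -
  note bracket = summable_Leibniz'[OF assms]
  let ?S = "\<Sum>i. (-1)^i * a i"
  show ?thesis
  proof (cases "even K")
    case True
    then obtain m where K: "K = 2 * m" by blast
    have "(\<Sum>i<2*m. (-1)^i * a i) \<le> ?S" and "?S \<le> (\<Sum>i<2*m+1. (-1)^i * a i)"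
      using bracket(2)[of m] bracket(4)[of m] by auto
    then show ?thesis unfolding K by simp
  next
    case False
    then obtain m where K: "K = 2 * m + 1" using oddE by blast
    have "(\<Sum>i<2*(m+1). (-1)^i * a i) \<le> ?S" and "?S \<le> (\<Sum>i<2*m+1. (-1)^i * a i)"
      using bracket(2)[of "m+1"] bracket(4)[of m] by auto
    then show ?thesis unfolding K by simp
  qed
qed

lemma binomial_series_neg_powr_remainder_le:
  fixes a x :: real
  assumes a: "1 \<le> a" and x: "0 \<le> x" "a * x < 1"
  shows "\<bar>(1 + x) powr (-a) - (\<Sum>k<K. ((-a) gchoose k) * x^k)\<bar> \<le> (a * x) ^ K"
proof -
  define t where "t k = pochhammer a k / fact k * x^k" for k
  define ratio where "ratio k = (a + real k) / (real k + 1) * x" for k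
  have coeff: "((-a) gchoose k) * x^k = (-1)^k * t k" for k
    unfolding t_def gbinomial_pochhammer by simp
  have t_Suc: "t (Suc k) = t k * ratio k" for k
    unfolding t_def ratio_def by (simp add: pochhammer_rec' field_simps)
  have t_nonneg: "0 \<le> t k" for k
    unfolding t_def using a x by (auto intro!: divide_nonneg_pos mult_nonneg_nonneg pochhammer_nonneg)
  have ratio_nonneg: "0 \<le> ratio k" for k
    unfolding ratio_def using a x by simp
  have ratio_le: "ratio k \<le> a * x" for k
  proof -
    have "real k \<le> a * real k"
      using mult_right_mono[OF a, of "real k"] by simp
    then have "(a + real k) / (real k + 1) \<le> a"
      by (simp add: pos_divide_le_eq algebra_simps)
    then show ?thesis
      unfolding ratio_def using x by (intro mult_right_mono)
  qed
  have t_le: "t k \<le> (a * x) ^ k" for k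
  proof (induction k)
    case (Suc k)
    have "t (Suc k) \<le> (a * x) ^ k * (a * x)"
      unfolding t_Suc using Suc.IH ratio_le[of k] t_nonneg ratio_nonneg a x
      by (intro mult_mono) auto
    then show ?case by (simp add: mult.commute)
  qed (simp add: t_def)
  have t_decreasing: "t (Suc k) \<le> t k" for k
    unfolding t_Suc using ratio_le[of k] x t_nonneg by (intro mult_left_le) auto
  have t_tendsto_zero: "t \<longlonglongrightarrow> 0"
  proof (rule real_tendsto_sandwich[of "\<lambda>_. 0" _ _ "\<lambda>k. (a * x) ^ k"])
    show "(\<lambda>k. (a * x) ^ k) \<longlonglongrightarrow> 0"
      using a x by (intro LIMSEQ_power_zero) auto
  qed (use t_nonneg t_le in auto)
  have "\<bar>x\<bar> < 1"
    using mult_right_mono[OF a x(1)] x by simp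
  then have "(\<lambda>k. (-1)^k * t k) sums (1 + x) powr (-a)"
    using gen_binomial_real[of x "-a"] unfolding coeff by simp
  then have "(1 + x) powr (-a) = (\<Sum>k. (-1)^k * t k)"
    by (simp add: sums_iff)
  then show ?thesis
    unfolding coeff
    using alternating_series_remainder_le[OF t_tendsto_zero t_nonneg t_decreasing, of K] t_le[of K]
    by linarith
qed

lemma power_le_powr_if_le_one:
  fixes b r :: real
  assumes "0 < b" "b \<le> 1" "r \<le> real k"
  shows "b ^ k \<le> b powr r"
proof -
  have "b powr real k \<le> b powr r"
    using powr_mono'[OF assms(3)] assms(1,2) by simp
  then show ?thesis
    using assms(1) by (simp add: powr_realpow)
qed

lemma divide_powr_half_plus_one:
  fixes q m r :: real
  assumes "q > 0" "m > 0"
  shows "(q / m) powr ((r + 2) / 2) = q * q powr (r / 2) * m powr (- (r + 2) / 2)"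
proof -
  have "(r + 2) / 2 = r / 2 + 1" "- (r + 2) / 2 = - (r / 2 + 1)"
    by simp_all
  then show ?thesis
    using assms by (simp only: powr_divide powr_minus_divide powr_add) simp
qed

lemma lam_constant_eq: "sqrt (pi / (6 * sqrt 2)) * 24 powr (5/4) = 8 * 3 powr (3/4) * sqrt pi"
proof -
  have fourth_power: "(y powr r) ^ 4 = y powr (4 * r)" if "y > 0" for y r :: real
    using that by (simp add: powr_realpow[symmetric] powr_powr mult.commute)
  have "(sqrt (pi / (6 * sqrt 2))) ^ 4 = ((sqrt (pi / (6 * sqrt 2)))^2)^2"
    unfolding power_mult[symmetric] by simp
  also have "\<dots> = pi^2 / 72"
    by (simp add: pi_ge_zero power_divide power_mult_distrib)
  finally have "(sqrt (pi / (6 * sqrt 2)) * 24 powr (5/4)) ^ 4 = (8 * 3 powr (3/4) * sqrt pi) ^ 4"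
    unfolding power_mult_distrib
    using fourth_power[of 24 "5/4"] fourth_power[of 3 "3/4"] power_mult[of "sqrt pi" 2 2]
    by simp
  then show ?thesis
    by (rule power_eq_imp_eq_base) auto
qed

lemma lam_eq: "lam n = sqrt (pi / (6 * sqrt 2)) * (24 * real n + 1) powr (1/4)"
proof -
  have "sqrt (sqrt (24 * real n + 1)) = (24 * real n + 1) powr (1/4)"
    by (simp add: powr_half_sqrt[symmetric] powr_powr)
  then show ?thesis
    unfolding lam_def real_sqrt_mult by simp
qed

lemma one_div_mult_lam_eq:
  assumes "n > 0"
  shows "1 / ((24 * real n + 1) * lam n) =
    1 / (8 * 3 powr (3/4) * sqrt pi * real n powr (5/4)) * (1 + 1 / (24 * real n)) powr (-5/4)"
proof -
  define y where "y = 24 * real n + 1"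
  have y_pos: "y > 0" unfolding y_def by simp
  have "y = 24 * real n * (1 + 1 / (24 * real n))"
    unfolding y_def using assms by (simp add: field_simps)
  then have "y powr (5/4) = 24 powr (5/4) * real n powr (5/4) * (1 + 1 / (24 * real n)) powr (5/4)"
    by (simp add: powr_mult)
  moreover have "y * y powr (1/4) = y powr (5/4)"
    using powr_add[of y 1 "1/4"] y_pos by simp
  ultimately have "y * lam n =
      8 * 3 powr (3/4) * sqrt pi * real n powr (5/4) * (1 + 1 / (24 * real n)) powr (5/4)"
    unfolding lam_eq y_def[symmetric] lam_constant_eq[symmetric] by (simp add: algebra_simps)
  then show ?thesis
    unfolding y_def by (simp add: powr_minus_divide)
qed

lemma first_omitted_term_le:
  fixes N n :: nat
  assumes "n > 0"
  shows "(5/96 / real n) ^ ((N + 1) div 2 + 1) \<le>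
    5.3 * 10 powr (-2) * (5/96) powr (real N / 2) * real n powr (- (real N + 2) / 2)"
proof -
  have "(5/96 / real n) ^ ((N + 1) div 2 + 1) \<le> (5/96 / real n) powr ((real N + 2) / 2)"
    using assms by (intro power_le_powr_if_le_one) auto
  also have "\<dots> = 5/96 * (5/96) powr (real N / 2) * real n powr (- (real N + 2) / 2)"
    by (rule divide_powr_half_plus_one) (use assms in auto)
  also have "\<dots> \<le> 5.3 * 10 powr (-2) * (5/96) powr (real N / 2) * real n powr (- (real N + 2) / 2)"
    by (intro mult_right_mono) (auto simp: powr_minus powr_numeral)
  finally show ?thesis .
qed

theorem lemma3p13:
  fixes N n :: nat
  assumes "N \<ge> 3" and "real n \<ge> nN N"
  shows "\<exists>E :: real.
    \<bar>E\<bar> \<le> 5.3 * 10 powr (-2) * (5/96) powr (real N / 2) * real n powr (- (real N + 2) / 2) \<and>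
    1 / ((24 * real n + 1) * lam n) =
      1 / (8 * 3 powr (3/4) * sqrt pi * real n powr (5/4)) *
      ((\<Sum>m = 0..(N + 1) div 2. e2 m / real n ^ m) + E)"
proof -
  have "nN N > 0" unfolding nN_def by (simp add: ln_gt_zero)
  then have n: "n > 0" using assms(2) by simp
  define x where "x = 1 / (24 * real n)"
  define M where "M = (N + 1) div 2"
  define E where "E = (1 + x) powr (-5/4) - (\<Sum>m = 0..M. e2 m / real n ^ m)"
  have partial_sum: "(\<Sum>m = 0..M. e2 m / real n ^ m) = (\<Sum>k<M+1. ((-(5/4)) gchoose k) * x^k)"
    unfolding atLeast0AtMost lessThan_Suc_atMost[symmetric] Suc_eq_plus1
    by (rule sum.cong) (auto simp: e2_def x_def power_divide power_mult_distrib)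
  have "\<bar>(1 + x) powr (-(5/4)) - (\<Sum>k<M+1. ((-(5/4)) gchoose k) * x^k)\<bar> \<le> (5/4 * x) ^ (M + 1)"
    using n by (intro binomial_series_neg_powr_remainder_le) (auto simp: x_def)
  then have "\<bar>E\<bar> \<le> (5/96 / real n) ^ (M + 1)"
    unfolding E_def partial_sum by (simp add: x_def)
  also have "\<dots> \<le> 5.3 * 10 powr (-2) * (5/96) powr (real N / 2) * real n powr (- (real N + 2) / 2)"
    unfolding M_def by (rule first_omitted_term_le[OF n])
  finally show ?thesis
    using one_div_mult_lam_eq[OF n] unfolding E_def M_def x_def by auto
qed

end
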